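(* Let $\mathbf{C}_\rho=\mathbb{E}_{\mathbf{x}\sim\rho}[\mathbf{x}\mathbf{x}^{\top}]\in\mathbb{R}^{d\times d}$ for a distribution $\rho$ on $\mathbb{R}^d$ with finite second moments, let $\lambda>0$, and let $\Omega$ be any set of real matrices with $d$ columns. For $\mathbf{X}\in\Omega$ write $\mathbf{M}=\mathbf{X}^{\top}\mathbf{X}$ and $\mathbf{M}_\lambda=\mathbf{M}+\lambda\mathbf{I}_d$, and for $t\ge 0$ define $$\bar{\varphi}_{\lambda,t}(\mathbf{M})=\big\|\mathbf{C}_\rho^{1/2}\big(\mathbf{I}-\mathbf{M}_\lambda^{+}\mathbf{M}\big)\big\|_F^{2}+t\,\mathrm{Tr}\big(\mathbf{C}_\rho(\mathbf{M}_\lambda^{+})^{2}\mathbf{M}\big).$$ Then $$\operatorname*{argmin}_{\mathbf{X}\in\Omega}\mathrm{Tr}\big(\mathbf{C}_\rho\mathbf{M}_\lambda^{-1}\big)=\operatorname*{argmin}_{\mathbf{X}\in\Omega}\bar{\varphi}_{\lambda,\lambda}(\mathbf{M}).$$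
   Context: ${}^{+}$ denotes the Moore–Penrose pseudoinverse, $\|\cdot\|_F$ the Frobenius norm, and $\mathbf{C}_\rho^{1/2}$ the positive semidefinite square root of $\mathbf{C}_\rho$. *)

theory Defs
  imports "HOL-Analysis.Analysis" "HOL-Probability.Probability"
begin

text \<open>A real matrix with d columns (arbitrary number m of rows) is represented as the
  list of its m rows, each a vector in real^'d.  Gram matrix X^T X.\<close>
definition gram :: "(real^'d) list \<Rightarrow> real^'d^'d" where
  "gram X = (\<chi> i j. (\<Sum>r\<leftarrow>X. r $ i * r $ j))"

definition second_moment :: "(real^'d) measure \<Rightarrow> real^'d^'d" where
  "second_moment \<rho> = (\<chi> i j. \<integral>x. x $ i * x $ j \<partial>\<rho>)"

definition finite_second_moments :: "(real^'d) measure \<Rightarrow> bool" where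
  "finite_second_moments \<rho> \<longleftrightarrow> (\<forall>i. integrable \<rho> (\<lambda>x. (x $ i)\<^sup>2))"

definition psd :: "real^'n^'n \<Rightarrow> bool" where
  "psd A \<longleftrightarrow> transpose A = A \<and> (\<forall>v. 0 \<le> v \<bullet> (A *v v))"

definition psd_sqrt :: "real^'n^'n \<Rightarrow> real^'n^'n" where
  "psd_sqrt A = (THE S. psd S \<and> S ** S = A)"

definition pinv :: "real^'n^'m \<Rightarrow> real^'m^'n" where
  "pinv A = (THE B. A ** B ** A = A \<and> B ** A ** B = B \<and>
      transpose (A ** B) = A ** B \<and> transpose (B ** A) = B ** A)"

definition frob_norm :: "real^'n^'m \<Rightarrow> real" where
  "frob_norm A = sqrt (\<Sum>i\<in>UNIV. \<Sum>j\<in>UNIV. (A $ i $ j)\<^sup>2)"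

definition phi_bar :: "real^'d^'d \<Rightarrow> real \<Rightarrow> real \<Rightarrow> real^'d^'d \<Rightarrow> real" where
  "phi_bar C lam t M =
     (let Ml = M + lam *\<^sub>R mat 1 in
      (frob_norm (psd_sqrt C ** (mat 1 - pinv Ml ** M)))\<^sup>2
      + t * trace (C ** (pinv Ml ** pinv Ml) ** M))"

definition argmin_on :: "'a set \<Rightarrow> ('a \<Rightarrow> real) \<Rightarrow> 'a set" where
  "argmin_on \<Omega> f = {X \<in> \<Omega>. \<forall>Y\<in>\<Omega>. f X \<le> f Y}"

end

theory Submission
  imports Defs
begin

text \<open>Since \<open>M\<^sub>\<lambda> = X\<^sup>T X + \<lambda> I\<close> is invertible, its pseudoinverse is its inverse \<open>A\<close>, and
  \<open>I - A M = \<lambda> A\<close>. The first term of \<open>phi_bar\<close> is therefore \<open>\<lambda>\<^sup>2 tr (C A\<^sup>2)\<close> and the second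
  \<open>\<lambda> tr (C A\<^sup>2 M)\<close>; together they give \<open>\<lambda> tr (C A\<^sup>2 M\<^sub>\<lambda>) = \<lambda> tr (C A)\<close>. So on all of \<open>\<Omega>\<close> one
  objective is \<open>\<lambda>\<close> times the other, and they have the same minimisers.
  The computation needs \<open>C\<close> and \<open>X\<^sup>T X\<close> to be positive semidefinite and \<open>C\<close> to have a unique
  positive semidefinite square root \<open>S\<close>, so that \<open>\<parallel>S B\<parallel>\<^sub>F\<^sup>2 = tr (C B B\<^sup>T)\<close>. Existence of \<open>S\<close>
  comes from the spectral theorem, obtained by maximising the Rayleigh quotient on invariant
  subspaces.\<close>

lemma quadratic_nonpos_imp_linear_coeff_zero:
  fixes b c :: real
  assumes "\<And>t. 2*t*b + t\<^sup>2*c \<le> 0"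
  shows "b = 0"
proof (rule ccontr)
  assume "b \<noteq> 0"
  define k where "k = \<bar>c\<bar> + 1"
  have k: "k > 0" "\<bar>c\<bar> < k" unfolding k_def by auto
  have "2*(b/k)*b + (b/k)\<^sup>2*c = (b\<^sup>2/k) * (2 + c/k)"
    using k(1) by (simp add: power2_eq_square field_simps)
  moreover have "b\<^sup>2/k > 0" using \<open>b \<noteq> 0\<close> k by auto
  moreover have "2 + c/k > 0" using k by (auto simp: field_simps abs_less_iff)
  ultimately show False using assms[of "b/k"] by (metis mult_pos_pos not_le)
qed

lemma symmetric_matrix_inner_commute:
  fixes A :: "real^'n^'n"
  assumes "transpose A = A"
  shows "(A *v x) \<bullet> y = x \<bullet> (A *v y)"
  by (metis assms dot_lmul_matrix vector_transpose_matrix)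

lemma scaleR_matrix_vector_assoc: "((k::real) *\<^sub>R (A::real^'n^'m)) *v x = k *\<^sub>R (A *v x)"
  by (simp add: matrix_vector_mult_def vec_eq_iff sum_distrib_left mult.assoc)

lemma uminus_matrix_vector_assoc: "(- A) *v x = - (A *v (x::'a::ring_1^'n))"
  by (simp add: matrix_vector_mult_def vec_eq_iff sum_negf)

lemma transpose_uminus_matrix: "transpose (- A) = - transpose (A::'a::ring_1^'n^'m)"
  by (simp add: transpose_def vec_eq_iff)

lemma transpose_add_matrix: "transpose (A + B) = transpose A + transpose (B::'a::semiring_1^'n^'m)"
  by (simp add: transpose_def vec_eq_iff)

lemma transpose_diff_matrix: "transpose (A - B) = transpose A - transpose (B::'a::ring_1^'n^'m)"
  by (simp add: transpose_def vec_eq_iff)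

lemma matrix_diff_ldistrib: "(A::'a::ring_1^'n^'m) ** (B - C) = A ** B - A ** C"
  by (simp add: matrix_matrix_mult_def vec_eq_iff sum_subtractf right_diff_distrib)

lemma matrix_diff_rdistrib: "((A::'a::ring_1^'n^'m) - B) ** C = A ** C - B ** C"
  by (simp add: matrix_matrix_mult_def vec_eq_iff sum_subtractf left_diff_distrib)

lemma trace_scaleR: "trace ((k::real) *\<^sub>R A) = k * trace (A::real^'n^'n)"
  by (simp add: trace_def sum_distrib_left)

lemma matrix_eq_on_spanning_set:
  fixes A A' :: "real^'n^'m"
  assumes "span B = UNIV" "\<And>b. b \<in> B \<Longrightarrow> A *v b = A' *v b"
  shows "A = A'"
  using linear_eq_on_span[OF matrix_vector_mul_linear matrix_vector_mul_linear, of B A A'] assms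
  by (auto simp: matrix_eq)

text \<open>Moving from \<open>x\<close> along \<open>w = A x\<close> changes the form by \<open>2 t (w \<bullet> w) + t\<^sup>2 (w \<bullet> A w)\<close>.\<close>
lemma quadratic_form_max_imp_kernel:
  fixes A :: "real^'n^'n"
  assumes sym: "transpose A = A" and V: "subspace V" and max: "\<And>v. v \<in> V \<Longrightarrow> v \<bullet> (A *v v) \<le> 0"
    and x: "x \<in> V" "A *v x \<in> V" "x \<bullet> (A *v x) = 0"
  shows "A *v x = 0"
proof -
  define w where "w = A *v x"
  have "2*t*(w \<bullet> w) + t\<^sup>2*(w \<bullet> (A *v w)) \<le> 0" for t
  proof -
    have "x + t *\<^sub>R w \<in> V" using V x by (simp add: w_def subspace_add subspace_scale)
    then have "(x + t *\<^sub>R w) \<bullet> (A *v (x + t *\<^sub>R w)) \<le> 0" by (rule max)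
    moreover have "x \<bullet> (A *v w) = w \<bullet> w"
      using symmetric_matrix_inner_commute[OF sym, of x w] by (simp add: w_def inner_commute)
    ultimately show ?thesis using x(3)
      by (simp add: w_def power2_eq_square algebra_simps)
  qed
  then have "w \<bullet> w = 0" by (rule quadratic_nonpos_imp_linear_coeff_zero)
  then show ?thesis by (simp add: w_def)
qed

lemma psd_symmetric: "psd S \<Longrightarrow> transpose S = S"
  unfolding psd_def by auto

lemma psd_nonneg: "psd S \<Longrightarrow> 0 \<le> v \<bullet> (S *v v)"
  unfolding psd_def by auto

lemma psd_quadratic_form_zero_imp_kernel:
  fixes S :: "real^'n^'n"
  assumes "psd S" "x \<bullet> (S *v x) = 0"
  shows "S *v x = 0"
proof -
  have "(- S) *v x = 0"
    using assms psd_nonneg[OF assms(1)]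
    by (intro quadratic_form_max_imp_kernel[where V = UNIV])
       (auto simp: transpose_uminus_matrix psd_symmetric uminus_matrix_vector_assoc)
  then show ?thesis by (simp add: uminus_matrix_vector_assoc)
qed

lemma psd_zero: "psd (0::real^'n^'n)"
  unfolding psd_def by (simp add: transpose_def vec_eq_iff)

lemma psd_add: "psd A \<Longrightarrow> psd B \<Longrightarrow> psd (A + B)"
  unfolding psd_def
  by (auto simp: transpose_add_matrix matrix_vector_mult_add_rdistrib inner_add_right)

lemma psd_sum: "(\<And>i. i \<in> I \<Longrightarrow> psd (f i)) \<Longrightarrow> psd (sum f I)"
  by (induct I rule: infinite_finite_induct) (auto simp: psd_zero psd_add)

text \<open>A maximiser \<open>u\<close> of the Rayleigh quotient on the invariant subspace is an eigenvector: with
  \<open>l\<close> the maximum, the form \<open>v \<bullet> ((A - l I) v)\<close> is nonpositive on the subspace and vanishes at \<open>u\<close>.\<close>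
lemma symmetric_matrix_eigenvector_in_invariant_subspace:
  fixes A :: "real^'n^'n"
  assumes sym: "transpose A = A" and V: "subspace V" and inv: "\<And>v. v \<in> V \<Longrightarrow> A *v v \<in> V"
    and x: "x \<in> V" "x \<noteq> 0"
  obtains u \<mu> where "u \<in> V" "norm u = 1" "A *v u = \<mu> *\<^sub>R u"
proof -
  define K where "K = V \<inter> sphere 0 1"
  have "compact K"
    unfolding K_def by (intro closed_Int_compact closed_subspace V compact_sphere)
  moreover have "x /\<^sub>R norm x \<in> K"
    using x V by (simp add: K_def subspace_scale)
  moreover have "continuous_on K (\<lambda>v. v \<bullet> (A *v v))"
    by (intro continuous_intros linear_continuous_on matrix_vector_mul_bounded_linear)
  ultimately obtain u where u: "u \<in> K" and u_max: "\<And>y. y \<in> K \<Longrightarrow> y \<bullet> (A *v y) \<le> u \<bullet> (A *v u)"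
    using continuous_attains_sup[of K "\<lambda>v. v \<bullet> (A *v v)"] by blast
  define l where "l = u \<bullet> (A *v u)"
  define A' where "A' = A - l *\<^sub>R mat 1"
  have A'_apply: "A' *v v = A *v v - l *\<^sub>R v" for v
    by (simp add: A'_def matrix_vector_mult_diff_rdistrib scaleR_matrix_vector_assoc)
  have "u \<in> V" "u \<bullet> u = 1"
    using u by (auto simp: K_def norm_eq_1)
  have "v \<bullet> (A' *v v) \<le> 0" if "v \<in> V" for v
  proof (cases "v = 0")
    case False
    have "v /\<^sub>R norm v \<in> K" using False that V by (simp add: K_def subspace_scale)
    then have "(v /\<^sub>R norm v) \<bullet> (A *v (v /\<^sub>R norm v)) \<le> l"
      unfolding l_def by (rule u_max)
    then have "(v \<bullet> (A *v v)) / (norm v)\<^sup>2 \<le> l"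
      by (simp add: l_def matrix_vector_mult_scaleR power2_eq_square divide_inverse mult_ac)
    then show ?thesis
      using False by (simp add: A'_apply inner_diff_right divide_le_eq power2_norm_eq_inner)
  qed simp
  moreover have "transpose A' = A'"
    by (simp add: A'_def transpose_diff_matrix transpose_scalar sym)
  moreover have "A' *v u \<in> V"
    using inv \<open>u \<in> V\<close> V by (simp add: A'_apply subspace_diff subspace_scale)
  moreover have "u \<bullet> (A' *v u) = 0"
    using \<open>u \<bullet> u = 1\<close> by (simp add: A'_apply inner_diff_right l_def)
  ultimately have "A' *v u = 0"
    using quadratic_form_max_imp_kernel \<open>u \<in> V\<close> V by blast
  then show ?thesis
    using that[of u l] \<open>u \<in> V\<close> \<open>u \<bullet> u = 1\<close> by (simp add: A'_apply norm_eq_1)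
qed

lemma symmetric_matrix_orthonormal_eigenvectors:
  fixes A :: "real^'n^'n"
  assumes sym: "transpose A = A"
  shows "k \<le> CARD('n) \<Longrightarrow> \<exists>B. finite B \<and> card B = k \<and> pairwise orthogonal B
           \<and> (\<forall>b\<in>B. norm b = 1 \<and> (\<exists>\<mu>. A *v b = \<mu> *\<^sub>R b))"
proof (induction k)
  case 0
  show ?case by (intro exI[of _ "{}"]) auto
next
  case (Suc k)
  then obtain B where B: "finite B" "card B = k" "pairwise orthogonal B"
    and B_eig: "\<forall>b\<in>B. norm b = 1 \<and> (\<exists>\<mu>. A *v b = \<mu> *\<^sub>R b)"
    by auto
  define V where "V = {v. \<forall>b\<in>B. orthogonal b v}"
  have V_subspace: "subspace V"
    unfolding V_def by (rule subspace_orthogonal_to_vectors)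
  have V_invariant: "A *v v \<in> V" if "v \<in> V" for v
  proof -
    have "b \<bullet> (A *v v) = 0" if "b \<in> B" for b
    proof -
      obtain \<mu> where "A *v b = \<mu> *\<^sub>R b" using B_eig \<open>b \<in> B\<close> by blast
      then show ?thesis
        using symmetric_matrix_inner_commute[OF sym, of b v] \<open>v \<in> V\<close> \<open>b \<in> B\<close>
        by (simp add: V_def orthogonal_def)
    qed
    then show ?thesis by (simp add: V_def orthogonal_def)
  qed
  have "dim B \<le> card B" using B(1) by (intro dim_le_card) (auto intro: span_base)
  then have "dim B < DIM(real^'n)" using Suc.prems B(2) by simp
  then obtain x where x: "x \<noteq> 0" "\<And>y. y \<in> span B \<Longrightarrow> orthogonal x y"
    using orthogonal_to_subspace_exists by blast
  have "x \<in> V"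
    using x(2) by (simp add: V_def span_base orthogonal_commute)
  then obtain u \<mu> where u: "u \<in> V" "norm u = 1" "A *v u = \<mu> *\<^sub>R u"
    using symmetric_matrix_eigenvector_in_invariant_subspace[OF sym V_subspace V_invariant _ x(1)]
    by blast
  have "u \<notin> B"
    using u by (auto simp: V_def orthogonal_def norm_eq_1)
  show ?case
  proof (intro exI[of _ "insert u B"] conjI)
    show "card (insert u B) = Suc k" using B(1,2) \<open>u \<notin> B\<close> by simp
    show "pairwise orthogonal (insert u B)"
      using B(3) u(1) by (auto simp: pairwise_insert V_def orthogonal_commute)
  qed (use B(1) B_eig u(2,3) in auto)
qed

corollary symmetric_matrix_orthonormal_eigenbasis:
  fixes A :: "real^'n^'n"
  assumes "transpose A = A"
  obtains B where "finite B" "span B = UNIV" "pairwise orthogonal B"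
    "\<And>b. b \<in> B \<Longrightarrow> norm b = 1" "\<And>b. b \<in> B \<Longrightarrow> \<exists>\<mu>. A *v b = \<mu> *\<^sub>R b"
proof -
  obtain B where B: "finite B" "card B = CARD('n)" "pairwise orthogonal B"
    and B_eig: "\<forall>b\<in>B. norm b = 1 \<and> (\<exists>\<mu>. A *v b = \<mu> *\<^sub>R b)"
    using symmetric_matrix_orthonormal_eigenvectors[OF assms order_refl] by blast
  have "independent B"
    using B(3) B_eig by (intro pairwise_orthogonal_independent) auto
  then have "dim B = DIM(real^'n)"
    using dim_span_eq_card_independent B(2) by (metis DIM_cart DIM_real dim_span mult_1_right)
  then have "span B = UNIV"
    by (simp only: dim_eq_full)
  then show ?thesis using that B B_eig by blast
qed

definition outer_product :: "real^'n \<Rightarrow> real^'n^'n" where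
  "outer_product r = (\<chi> i j. r $ i * r $ j)"

lemma outer_product_mult_vec: "outer_product r *v v = (r \<bullet> v) *\<^sub>R r"
  by (simp add: outer_product_def matrix_vector_mult_def vec_eq_iff inner_vec_def sum_distrib_left mult_ac)

lemma psd_scaled_outer_product:
  assumes "0 \<le> c"
  shows "psd (c *\<^sub>R outer_product r)"
proof -
  have "transpose (outer_product r) = outer_product r"
    by (simp add: outer_product_def transpose_def vec_eq_iff mult.commute)
  then show ?thesis
    using assms by (simp add: psd_def transpose_scalar scaleR_matrix_vector_assoc
        outer_product_mult_vec inner_commute mult.assoc)
qed

lemma sum_matrix_vector_mult: "(\<Sum>i\<in>I. f i) *v x = (\<Sum>i\<in>I. f i *v x)"
  by (induct I rule: infinite_finite_induct) (simp_all add: matrix_vector_mult_add_rdistrib)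

lemma psd_sqrt_exists:
  fixes C :: "real^'n^'n"
  assumes "psd C"
  obtains S where "psd S" "S ** S = C"
proof -
  obtain B where B: "finite B" "span B = UNIV" "pairwise orthogonal B"
    and unit: "\<And>b. b \<in> B \<Longrightarrow> b \<bullet> b = 1" and eig: "\<And>b. b \<in> B \<Longrightarrow> \<exists>\<mu>. C *v b = \<mu> *\<^sub>R b"
    using symmetric_matrix_orthonormal_eigenbasis[OF psd_symmetric[OF assms]] by (metis norm_eq_1)
  define m where "m b = b \<bullet> (C *v b)" for b
  have C_eig: "C *v b = m b *\<^sub>R b" if "b \<in> B" for b
    using eig[OF that] unit[OF that] by (auto simp: m_def)
  have m_nonneg: "0 \<le> m b" for b
    using psd_nonneg[OF assms] by (simp add: m_def)
  define S where "S = (\<Sum>c\<in>B. sqrt (m c) *\<^sub>R outer_product c)"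
  have S_eig: "S *v b = sqrt (m b) *\<^sub>R b" if "b \<in> B" for b
  proof -
    have "S *v b = (\<Sum>c\<in>B. if c = b then sqrt (m b) *\<^sub>R b else 0)"
      unfolding S_def sum_matrix_vector_mult
    proof (rule sum.cong)
      fix c assume "c \<in> B"
      then show "(sqrt (m c) *\<^sub>R outer_product c) *v b = (if c = b then sqrt (m b) *\<^sub>R b else 0)"
        using B(3) that unit
        by (auto simp: scaleR_matrix_vector_assoc outer_product_mult_vec pairwise_def orthogonal_def)
    qed simp
    then show ?thesis using B(1) that by simp
  qed
  have "psd S"
    unfolding S_def by (intro psd_sum psd_scaled_outer_product real_sqrt_ge_zero m_nonneg)
  moreover have "S ** S = C"
  proof (rule matrix_eq_on_spanning_set[OF B(2)])
    fix b assume "b \<in> B"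
    then show "(S ** S) *v b = C *v b"
      using m_nonneg[of b]
      by (simp add: matrix_vector_mul_assoc[symmetric] S_eig C_eig matrix_vector_mult_scaleR)
  qed
  ultimately show ?thesis by (rule that)
qed

text \<open>For \<open>D = S - T\<close> we have \<open>S D + D T = S\<^sup>2 - T\<^sup>2 = 0\<close>; testing this against an eigenvector
  \<open>v\<close> of the symmetric \<open>D\<close> with eigenvalue \<open>\<mu> \<noteq> 0\<close> gives \<open>\<mu> (v \<bullet> S v + v \<bullet> T v) = 0\<close>, so
  \<open>S v = T v = 0\<close> and hence \<open>D v = 0\<close> after all.\<close>
lemma psd_sqrt_unique:
  fixes S T :: "real^'n^'n"
  assumes S: "psd S" and T: "psd T" and eq: "S ** S = T ** T"
  shows "S = T"
proof -
  define D where "D = S - T"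
  have D_sym: "transpose D = D"
    using psd_symmetric[OF S] psd_symmetric[OF T] by (simp add: D_def transpose_diff_matrix)
  have SD_DT: "S ** D + D ** T = 0"
    by (simp add: D_def matrix_diff_ldistrib matrix_diff_rdistrib eq)
  obtain B where B: "span B = UNIV" and eig: "\<And>b. b \<in> B \<Longrightarrow> \<exists>\<mu>. D *v b = \<mu> *\<^sub>R b"
    using symmetric_matrix_orthonormal_eigenbasis[OF D_sym] by metis
  have "D *v v = 0 *v v" if v: "v \<in> B" for v
  proof -
    obtain \<mu> where \<mu>: "D *v v = \<mu> *\<^sub>R v" using eig[OF v] by blast
    have "0 = v \<bullet> ((S ** D + D ** T) *v v)" by (simp add: SD_DT)
    also have "\<dots> = v \<bullet> (S *v (D *v v)) + (D *v v) \<bullet> (T *v v)"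
      by (simp add: matrix_vector_mult_add_rdistrib matrix_vector_mul_assoc[symmetric] inner_add_right
          symmetric_matrix_inner_commute[OF D_sym])
    also have "\<dots> = \<mu> * (v \<bullet> (S *v v) + v \<bullet> (T *v v))"
      by (simp add: \<mu> algebra_simps)
    finally have "\<mu> = 0 \<or> v \<bullet> (S *v v) = 0 \<and> v \<bullet> (T *v v) = 0"
      using psd_nonneg[OF S, of v] psd_nonneg[OF T, of v] by auto
    then show ?thesis
    proof
      assume "v \<bullet> (S *v v) = 0 \<and> v \<bullet> (T *v v) = 0"
      then have "S *v v = 0" "T *v v = 0"
        using psd_quadratic_form_zero_imp_kernel[OF S] psd_quadratic_form_zero_imp_kernel[OF T] by auto
      then show ?thesis by (simp add: D_def matrix_vector_mult_diff_rdistrib)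
    qed (simp add: \<mu>)
  qed
  then have "D = 0" by (rule matrix_eq_on_spanning_set[OF B])
  then show ?thesis by (simp add: D_def)
qed

lemma psd_sqrt:
  fixes C :: "real^'n^'n"
  assumes "psd C"
  shows "psd (psd_sqrt C)" "psd_sqrt C ** psd_sqrt C = C"
proof -
  have "\<exists>!S. psd S \<and> S ** S = C"
    using psd_sqrt_exists[OF assms] psd_sqrt_unique by metis
  then have "psd (psd_sqrt C) \<and> psd_sqrt C ** psd_sqrt C = C"
    unfolding psd_sqrt_def by (rule theI')
  then show "psd (psd_sqrt C)" "psd_sqrt C ** psd_sqrt C = C" by auto
qed

lemma matrix_inv_inverse:
  fixes A :: "real^'n^'n"
  assumes "invertible A"
  shows "A ** matrix_inv A = mat 1" "matrix_inv A ** A = mat 1"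
  using someI_ex[OF assms[unfolded invertible_def]] by (simp_all add: matrix_inv_def)

lemma transpose_matrix_inv_symmetric:
  fixes A :: "real^'n^'n"
  assumes "invertible A" "transpose A = A"
  shows "transpose (matrix_inv A) = matrix_inv A"
proof -
  have "transpose (matrix_inv A) ** A = mat 1"
    using matrix_inv_inverse(1)[OF assms(1)] assms(2) by (metis matrix_transpose_mul transpose_mat)
  have "transpose (matrix_inv A) = transpose (matrix_inv A) ** (A ** matrix_inv A)"
    by (simp add: matrix_inv_inverse(1)[OF assms(1)])
  also have "\<dots> = (transpose (matrix_inv A) ** A) ** matrix_inv A"
    by (simp add: matrix_mul_assoc)
  also have "\<dots> = matrix_inv A"
    by (simp add: \<open>transpose (matrix_inv A) ** A = mat 1\<close>)
  finally show ?thesis .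
qed

lemma pinv_eq_matrix_inv:
  fixes A :: "real^'n^'n"
  assumes "invertible A"
  shows "pinv A = matrix_inv A"
  unfolding pinv_def
proof (rule the_equality)
  fix B
  assume "A ** B ** A = A \<and> B ** A ** B = B \<and> transpose (A ** B) = A ** B \<and> transpose (B ** A) = B ** A"
  then have "A ** B ** A = A" by blast
  have "B = (matrix_inv A ** A) ** B ** (A ** matrix_inv A)"
    by (simp add: matrix_inv_inverse[OF assms])
  also have "\<dots> = matrix_inv A ** (A ** B ** A) ** matrix_inv A"
    by (simp add: matrix_mul_assoc)
  also have "\<dots> = matrix_inv A"
    by (simp add: \<open>A ** B ** A = A\<close> matrix_mul_assoc matrix_inv_inverse[OF assms])
  finally show "B = matrix_inv A" .
qed (simp add: matrix_inv_inverse[OF assms])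

lemma psd_add_scaled_identity_invertible:
  fixes M :: "real^'n^'n"
  assumes "psd M" "lam > 0"
  shows "invertible (M + lam *\<^sub>R mat 1)"
proof -
  have "x = 0" if "(M + lam *\<^sub>R mat 1) *v x = 0" for x
  proof -
    have "0 = x \<bullet> ((M + lam *\<^sub>R mat 1) *v x)"
      using that by simp
    also have "\<dots> = x \<bullet> (M *v x) + lam * (x \<bullet> x)"
      by (simp add: matrix_vector_mult_add_rdistrib scaleR_matrix_vector_assoc inner_add_right)
    finally have "x \<bullet> x \<le> 0"
      using psd_nonneg[OF assms(1), of x] assms(2) by (smt (verit) mult_pos_pos)
    then show "x = 0" by (metis inner_eq_zero_iff inner_ge_zero order.antisym)
  qed
  then show ?thesis
    unfolding invertible_left_inverse matrix_left_invertible_ker by blast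
qed

lemma frob_norm_square: "(frob_norm B)\<^sup>2 = trace (transpose B ** B)"
proof -
  have "(frob_norm B)\<^sup>2 = (\<Sum>i\<in>UNIV. \<Sum>j\<in>UNIV. (B $ i $ j)\<^sup>2)"
    unfolding frob_norm_def by (simp add: sum_nonneg)
  also have "\<dots> = trace (transpose B ** B)"
    by (subst sum.swap) (simp add: trace_def matrix_matrix_mult_def transpose_def power2_eq_square)
  finally show ?thesis .
qed

lemma frob_norm_psd_sqrt_mult:
  fixes C :: "real^'n^'n" and B :: "real^'m^'n"
  assumes "psd C"
  shows "(frob_norm (psd_sqrt C ** B))\<^sup>2 = trace (C ** (B ** transpose B))"
proof -
  have "transpose (psd_sqrt C ** B) ** (psd_sqrt C ** B) = transpose B ** (psd_sqrt C ** psd_sqrt C) ** B"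
    using psd_symmetric[OF psd_sqrt(1)[OF assms]] by (simp add: matrix_transpose_mul matrix_mul_assoc)
  also have "\<dots> = transpose B ** C ** B"
    by (simp add: psd_sqrt(2)[OF assms])
  finally have "(frob_norm (psd_sqrt C ** B))\<^sup>2 = trace (transpose B ** C ** B)"
    by (simp add: frob_norm_square)
  also have "\<dots> = trace (B ** (transpose B ** C))"
    by (rule trace_mul_sym)
  also have "\<dots> = trace (C ** (B ** transpose B))"
    by (metis trace_mul_sym matrix_mul_assoc)
  finally show ?thesis .
qed

lemma phi_bar_lam_lam_eq_trace_inverse:
  fixes C M :: "real^'n^'n"
  assumes C: "psd C" and M: "psd M" and lam: "lam > 0"
  shows "phi_bar C lam lam M = lam * trace (C ** matrix_inv (M + lam *\<^sub>R mat 1))"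
proof -
  define Ml where "Ml = M + lam *\<^sub>R mat 1"
  define A where "A = matrix_inv Ml"
  have inv: "invertible Ml"
    unfolding Ml_def by (rule psd_add_scaled_identity_invertible[OF M lam])
  have A_sym: "transpose A = A"
    using transpose_matrix_inv_symmetric[OF inv] psd_symmetric[OF M]
    by (simp add: A_def Ml_def transpose_add_matrix transpose_scalar)
  have "A ** M + lam *\<^sub>R A = mat 1"
    using matrix_inv_inverse(2)[OF inv] by (simp add: A_def Ml_def matrix_add_ldistrib matrix_scalar_ac)
  then have "mat 1 - A ** M = lam *\<^sub>R A"
    by (metis add_diff_cancel_left')
  moreover have "(frob_norm (psd_sqrt C ** (lam *\<^sub>R A)))\<^sup>2 = lam * lam * trace (C ** (A ** A))"
    by (simp only: frob_norm_psd_sqrt_mult[OF C]) (simp add: transpose_scalar A_sym matrix_scalar_ac scalar_matrix_assoc[symmetric] trace_scaleR)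
  ultimately have "phi_bar C lam lam M = lam * lam * trace (C ** (A ** A)) + lam * trace (C ** (A ** A) ** M)"
    by (simp add: phi_bar_def Ml_def[symmetric] pinv_eq_matrix_inv[OF inv] A_def[symmetric])
  also have "\<dots> = lam * trace (C ** (A ** A) ** Ml)"
    by (simp add: Ml_def matrix_add_ldistrib matrix_scalar_ac trace_add trace_scaleR algebra_simps)
  also have "\<dots> = lam * trace (C ** A)"
    by (simp add: matrix_mul_assoc[symmetric] A_def matrix_inv_inverse(2)[OF inv])
  finally show ?thesis by (simp add: A_def Ml_def)
qed

lemma gram_Nil: "gram [] = 0"
  by (simp add: gram_def vec_eq_iff)

lemma gram_Cons: "gram (r # X) = outer_product r + gram X"
  by (simp add: gram_def outer_product_def vec_eq_iff)

lemma psd_gram: "psd (gram X)"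
proof (induction X)
  case (Cons r X)
  then show ?case using psd_scaled_outer_product[of 1 r] by (simp add: gram_Cons psd_add)
qed (simp add: gram_Nil psd_zero)

lemma integrable_mult_of_square_integrable:
  fixes f g :: "'a \<Rightarrow> real"
  assumes "integrable M (\<lambda>x. (f x)\<^sup>2)" "integrable M (\<lambda>x. (g x)\<^sup>2)"
    and "f \<in> borel_measurable M" "g \<in> borel_measurable M"
  shows "integrable M (\<lambda>x. f x * g x)"
proof (rule Bochner_Integration.integrable_bound[OF Bochner_Integration.integrable_add[OF assms(1,2)]])
  show "(\<lambda>x. f x * g x) \<in> borel_measurable M" using assms(3,4) by measurable
  have "\<bar>a * b\<bar> \<le> a\<^sup>2 + b\<^sup>2" for a b :: real
    using sum_squares_bound[of "\<bar>a\<bar>" "\<bar>b\<bar>"] abs_ge_zero[of "a * b"]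
    by (simp only: abs_mult power2_abs)
  then show "AE x in M. norm (f x * g x) \<le> norm ((f x)\<^sup>2 + (g x)\<^sup>2)"
    by simp
qed

lemma psd_second_moment:
  fixes \<rho> :: "(real^'d) measure"
  assumes sets: "sets \<rho> = sets borel" and fsm: "finite_second_moments \<rho>"
  shows "psd (second_moment \<rho>)"
proof -
  have "(\<lambda>x. x $ i) \<in> borel_measurable \<rho>" for i
    unfolding measurable_cong_sets[OF sets refl]
    by (intro borel_measurable_continuous_onI continuous_intros)
  then have int: "integrable \<rho> (\<lambda>x. x $ i * x $ j)" for i j
    using fsm by (intro integrable_mult_of_square_integrable) (auto simp: finite_second_moments_def)
  have "transpose (second_moment \<rho>) = second_moment \<rho>"
    by (simp add: second_moment_def transpose_def vec_eq_iff mult.commute)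
  moreover have "v \<bullet> (second_moment \<rho> *v v) = (\<integral>x. (v \<bullet> x)\<^sup>2 \<partial>\<rho>)" for v
  proof -
    have "v \<bullet> (second_moment \<rho> *v v) = (\<Sum>i\<in>UNIV. \<Sum>j\<in>UNIV. v$i * v$j * (\<integral>x. x$i * x$j \<partial>\<rho>))"
      by (simp add: second_moment_def inner_vec_def matrix_vector_mult_def sum_distrib_left mult_ac)
    also have "\<dots> = (\<Sum>i\<in>UNIV. \<Sum>j\<in>UNIV. (\<integral>x. v$i * v$j * (x$i * x$j) \<partial>\<rho>))"
      by simp
    also have "\<dots> = (\<integral>x. (\<Sum>i\<in>UNIV. \<Sum>j\<in>UNIV. v$i * v$j * (x$i * x$j)) \<partial>\<rho>)"
      using int by (simp add: integral_sum)
    also have "\<dots> = (\<integral>x. (v \<bullet> x)\<^sup>2 \<partial>\<rho>)"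
      by (simp add: inner_vec_def power2_eq_square sum_product mult_ac)
    finally show ?thesis .
  qed
  ultimately show ?thesis
    by (simp add: psd_def)
qed

lemma argmin_on_cmult:
  fixes f g :: "'a \<Rightarrow> real"
  assumes "c > 0" "\<And>X. X \<in> \<Omega> \<Longrightarrow> g X = c * f X"
  shows "argmin_on \<Omega> f = argmin_on \<Omega> g"
  using assms unfolding argmin_on_def by auto

theorem proposition6:
  fixes \<rho> :: "(real^'d) measure" and lam :: real and \<Omega> :: "(real^'d) list set"
  assumes "prob_space \<rho>" and "sets \<rho> = sets borel"
    and "finite_second_moments \<rho>"
    and "lam > 0"
  shows "argmin_on \<Omega> (\<lambda>X. trace (second_moment \<rho> ** matrix_inv (gram X + lam *\<^sub>R mat 1)))
       = argmin_on \<Omega> (\<lambda>X. phi_bar (second_moment \<rho>) lam lam (gram X))"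
proof (rule argmin_on_cmult[OF \<open>lam > 0\<close>])
  have C: "psd (second_moment \<rho>)"
    using assms(2,3) by (rule psd_second_moment)
  fix X
  show "phi_bar (second_moment \<rho>) lam lam (gram X)
      = lam * trace (second_moment \<rho> ** matrix_inv (gram X + lam *\<^sub>R mat 1))"
    by (rule phi_bar_lam_lam_eq_trace_inverse[OF C psd_gram \<open>lam > 0\<close>])
qed

end
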